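(* Fix any $\alpha>0$ (and integer $k\ge2$, $r>0$, $0<p<1$). Then, as $n\to\infty$, $$\frac{\mathbb{E}[X^2]}{\mathbb{E}[X]^2}=(1+o(1))\sum_{S=0}^{n}B(S)\left(f(S/n)+\frac{p\,g(S/n)}{(1-p)(1-d^{-k})\,n}\right)^{rm}\le (1+o(1))\sum_{S=0}^{n}\Phi(S).$$
   Context: Model RB with parameters $(n,\alpha,r,k,p)$, where $n$ is the number of variables, $\alpha>0$, $r>0$, $k\ge 2$ an integer and $0<p<1$: there are $n$ variables $x_1,\dots,x_n$, each with the same domain $D$ of size $d=n^{\alpha}$ (treated as an integer). A random instance is generated as follows: (1) select, independently with repetition, $t=rn\ln d$ constraints, the scope of each being a set of $k$ distinct variables chosen uniformly at random among the $n$ variables; (2) for each constraint, select uniformly at random without repetition a set of $q=p\,d^{k}$ "incompatible" tuples from $D^{k}$. An assignment to all variables is a solution if for every constraint the tuple of values of its scope is not incompatible. $X$ is the number of solutions. Limits are as $n\to\infty$ with $\alpha,r,k,p$ fixed. Notation: $m=n\ln d$; $f(s)=1+\frac{p}{1-p}\cdot\frac{s^k-d^{-k}}{1-d^{-k}}$ for $s\in[0,1]$; $g(s)=-\frac{k(k-1)}{2}(1-s)s^{k-1}$; $B(S)=\binom{n}{S}\left(\frac1d\right)^{S}\left(1-\frac1d\right)^{n-S}$; $W(S)=f(S/n)^{rm}$; $\Phi(S)=B(S)W(S)$ for $S=0,1,\dots,n$. *)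

theory Defs
  imports "HOL-Probability.Probability"
begin

text \<open>A constraint is a pair
  (scope, incompatible tuples): the scope is a k-subset of the variables, and a tuple of values
  of the scope is an (extensional) function from the scope to D, i.e. an element of
  PiE scope (\<lambda>_. D), which is in bijection with D^k.\<close>

definition rb_constraint_pmf :: "nat \<Rightarrow> nat \<Rightarrow> nat \<Rightarrow> nat \<Rightarrow> (nat set \<times> (nat \<Rightarrow> nat) set) pmf" where
  "rb_constraint_pmf n d k q =
     do { S \<leftarrow> pmf_of_set {S. S \<subseteq> {..<n} \<and> card S = k};
          I \<leftarrow> pmf_of_set {I. I \<subseteq> PiE S (\<lambda>_. {..<d}) \<and> card I = q};
          return_pmf (S, I) }"

definition rb_instance_pmf :: "nat \<Rightarrow> nat \<Rightarrow> nat \<Rightarrow> nat \<Rightarrow> nat \<Rightarrow> (nat \<Rightarrow> nat set \<times> (nat \<Rightarrow> nat) set) pmf" where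
  "rb_instance_pmf n d k q t = Pi_pmf {..<t} ({}, {}) (\<lambda>_. rb_constraint_pmf n d k q)"

definition rb_num_sol :: "nat \<Rightarrow> nat \<Rightarrow> nat \<Rightarrow> (nat \<Rightarrow> nat set \<times> (nat \<Rightarrow> nat) set) \<Rightarrow> nat" where
  "rb_num_sol n d t inst =
     card {\<sigma> \<in> PiE {..<n} (\<lambda>_. {..<d}). \<forall>i<t. restrict \<sigma> (fst (inst i)) \<notin> snd (inst i)}"

definition rb_d :: "real \<Rightarrow> nat \<Rightarrow> nat" where
  "rb_d \<alpha> n = nat \<lfloor>real n powr \<alpha>\<rfloor>"

text \<open>t = r m = r n ln d.\<close>
definition rb_t :: "real \<Rightarrow> real \<Rightarrow> nat \<Rightarrow> nat" where
  "rb_t \<alpha> r n = nat \<lfloor>r * real n * ln (real (rb_d \<alpha> n))\<rfloor>"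

definition rb_q :: "real \<Rightarrow> nat \<Rightarrow> real \<Rightarrow> nat \<Rightarrow> nat" where
  "rb_q \<alpha> k p n = nat \<lfloor>p * real (rb_d \<alpha> n) ^ k\<rfloor>"

text \<open>The actual tightness q / d^k of the generated instance.\<close>
definition rb_p :: "real \<Rightarrow> nat \<Rightarrow> real \<Rightarrow> nat \<Rightarrow> real" where
  "rb_p \<alpha> k p n = real (rb_q \<alpha> k p n) / real (rb_d \<alpha> n) ^ k"

definition rb_moment_ratio :: "real \<Rightarrow> real \<Rightarrow> nat \<Rightarrow> real \<Rightarrow> nat \<Rightarrow> real" where
  "rb_moment_ratio \<alpha> r k p n =
     (let d = rb_d \<alpha> n; t = rb_t \<alpha> r n; q = rb_q \<alpha> k p n;
          M = rb_instance_pmf n d k q t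
      in measure_pmf.expectation M (\<lambda>inst. real (rb_num_sol n d t inst) ^ 2)
         / (measure_pmf.expectation M (\<lambda>inst. real (rb_num_sol n d t inst))) ^ 2)"

definition rb_f :: "real \<Rightarrow> nat \<Rightarrow> nat \<Rightarrow> real \<Rightarrow> real" where
  "rb_f p d k s = 1 + p / (1 - p) * ((s ^ k - (1 / real d) ^ k) / (1 - (1 / real d) ^ k))"

definition rb_g :: "nat \<Rightarrow> real \<Rightarrow> real" where
  "rb_g k s = - (real k * (real k - 1) / 2) * (1 - s) * s ^ (k - 1)"

definition rb_B :: "nat \<Rightarrow> nat \<Rightarrow> nat \<Rightarrow> real" where
  "rb_B n d S = real (n choose S) * (1 / real d) ^ S * (1 - 1 / real d) ^ (n - S)"

end

(* Both moments are computed exactly.  The t constraints are independent, so E[X] and E[X^2]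
   are sums of t-th powers of one-constraint probabilities; grouping pairs of assignments by the
   number S of variables on which they agree gives E[X^2]/E[X]^2 = sum_S B(S) R_S^t, where R_S
   is affine in binom(S,k)/binom(n,k) with slope O(1).  Expanding the falling factorials,
   binom(S,k)/binom(n,k) = s^k + g(s)/n + O(k^4/n^2) with s = S/n, so R_S equals the corrected
   base f(s) + p g(s)/((1-p)(1-d^-k) n) up to a relative error O(1/n^2); raised to the power
   t = O(n ln n) this is a factor 1 + O(ln n / n).  Finally g <= 0 on [0,1] gives the comparison
   with Phi. *)

theory Submission
  imports Defs "HOL-Real_Asymp.Real_Asymp"
begin

section \<open>Random subsets and independent products\<close>

lemma card_subsets_disjoint_from:
  assumes "finite A" "B \<subseteq> A"
  shows "card {I. I \<subseteq> A \<and> card I = q \<and> I \<inter> B = {}} = (card A - card B) choose q"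
proof -
  have "{I. I \<subseteq> A \<and> card I = q \<and> I \<inter> B = {}} = {I. I \<subseteq> A - B \<and> card I = q}" by auto
  then show ?thesis using assms by (simp add: n_subsets card_Diff_subset finite_subset)
qed

lemma expectation_random_subset_disjoint_from:
  assumes "finite A" "B \<subseteq> A" "q \<le> card A"
  shows "measure_pmf.expectation (pmf_of_set {I. I \<subseteq> A \<and> card I = q}) (\<lambda>I. of_bool (I \<inter> B = {}))
       = real ((card A - card B) choose q) / real (card A choose q)"
proof -
  let ?Q = "{I. I \<subseteq> A \<and> card I = q}"
  have card_Q: "card ?Q = card A choose q" using assms(1) by (simp add: n_subsets)
  have "finite ?Q" using assms(1) by simp
  moreover have "?Q \<noteq> {}" using card_Q assms(3) by (metis card.empty zero_less_binomial_iff less_irrefl)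
  ultimately have "measure_pmf.expectation (pmf_of_set ?Q) (\<lambda>I. of_bool (I \<inter> B = {}))
      = real (card {I \<in> ?Q. I \<inter> B = {}}) / real (card ?Q)"
    by (simp add: integral_pmf_of_set Int_def)
  also have "{I \<in> ?Q. I \<inter> B = {}} = {I. I \<subseteq> A \<and> card I = q \<and> I \<inter> B = {}}" by auto
  finally show ?thesis using card_subsets_disjoint_from[OF assms(1,2)] card_Q by simp
qed

lemma expectation_random_scope_subset:
  assumes "k \<le> n" "A \<subseteq> {..<n}"
  shows "measure_pmf.expectation (pmf_of_set {S. S \<subseteq> {..<n} \<and> card S = k}) (\<lambda>S. if S \<subseteq> A then a else b)
       = (real (card A choose k) * a + (real (n choose k) - real (card A choose k)) * b) / real (n choose k)"
proof -
  let ?K = "{S. S \<subseteq> {..<n} \<and> card S = k}"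
  let ?KA = "{S. S \<subseteq> A \<and> card S = k}"
  have card_K: "card ?K = n choose k" by (simp add: n_subsets)
  have fin: "finite ?K" by simp
  have ne: "?K \<noteq> {}" using card_K assms(1) by (metis card.empty zero_less_binomial_iff less_irrefl)
  have KA: "?K \<inter> {S. S \<subseteq> A} = ?KA" using assms(2) by auto
  have card_KA: "card ?KA = card A choose k"
    using assms(2) by (intro n_subsets) (auto intro: finite_subset)
  have "card (?K - ?KA) = card ?K - card ?KA"
    using assms(2) by (intro card_Diff_subset finite_subset[OF _ fin]) auto
  moreover have "?K \<inter> - {S. S \<subseteq> A} = ?K - ?KA" by auto
  ultimately have card_rest: "card (?K \<inter> - {S. S \<subseteq> A}) = card ?K - card ?KA" by simp
  have "card A \<le> n" using card_mono[OF _ assms(2)] by simp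
  then have le: "card A choose k \<le> n choose k" by (rule binomial_right_mono)
  have "(\<Sum>S\<in>?K. if S \<subseteq> A then a else b) = real (card ?KA) * a + real (card (?K \<inter> - {S. S \<subseteq> A})) * b"
    using fin KA by (simp add: sum.If_cases)
  then show ?thesis using fin ne card_K card_KA card_rest le
    by (simp add: integral_pmf_of_set of_nat_diff)
qed

lemma real_choose_diff_one:
  "real N * real ((N - 1) choose q) = real (N - q) * real (N choose q)"
  by (metis binomial_absorb_comp of_nat_mult)

lemma real_choose_diff_two:
  "real N * real (N - 1) * real ((N - 2) choose q) = real (N - q) * real (N - 1 - q) * real (N choose q)"
proof -
  have "real (N - 1) * real ((N - 2) choose q) = real (N - 1 - q) * real ((N - 1) choose q)"
    using real_choose_diff_one[of "N - 1" q] by (simp add: numeral_2_eq_2)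
  then show ?thesis using real_choose_diff_one[of N q] by (metis mult.commute mult.left_commute)
qed

lemma of_bool_Ball_eq_prod:
  "finite A \<Longrightarrow> (of_bool (\<forall>i\<in>A. P i) :: 'a :: comm_semiring_1) = (\<Prod>i\<in>A. of_bool (P i))"
  by (cases "\<forall>i\<in>A. P i") (auto intro!: prod.neutral prod_zero)

lemma integrable_of_bool_pmf: "integrable (measure_pmf M) (\<lambda>x. of_bool (P x) :: real)"
  by (rule measure_pmf.integrable_const_bound[where B = 1]) auto

lemma integrable_Pi_pmf_prod_of_bool:
  "integrable (measure_pmf (Pi_pmf {..<t :: nat} dflt (\<lambda>_. C))) (\<lambda>inst. \<Prod>i<t. of_bool (P (inst i)) :: real)"
  by (rule integrable_prod_Pi_pmf[where f = "\<lambda>_ c. of_bool (P c)"]) (simp_all add: integrable_of_bool_pmf)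

lemma expectation_Pi_pmf_prod_of_bool:
  "measure_pmf.expectation (Pi_pmf {..<t :: nat} dflt (\<lambda>_. C)) (\<lambda>inst. \<Prod>i<t. of_bool (P (inst i)) :: real)
     = measure_pmf.expectation C (\<lambda>c. of_bool (P c)) ^ t"
  using expectation_prod_Pi_pmf[of "{..<t}" "\<lambda>_. C" "\<lambda>_ c. of_bool (P c)" dflt]
  by (simp add: integrable_of_bool_pmf)

section \<open>The exact moment ratio of Model RB\<close>

definition rb_satisfies :: "(nat \<Rightarrow> nat) \<Rightarrow> nat set \<times> (nat \<Rightarrow> nat) set \<Rightarrow> bool" where
  "rb_satisfies \<sigma> c \<longleftrightarrow> restrict \<sigma> (fst c) \<notin> snd c"

definition tuple_avoid_prob :: "nat \<Rightarrow> nat \<Rightarrow> nat \<Rightarrow> nat \<Rightarrow> real" where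
  "tuple_avoid_prob d k q j = real ((d ^ k - j) choose q) / real (d ^ k choose q)"

definition rb_pair_prob :: "nat \<Rightarrow> nat \<Rightarrow> nat \<Rightarrow> nat \<Rightarrow> nat \<Rightarrow> real" where
  "rb_pair_prob n d k q s =
     (real (s choose k) * tuple_avoid_prob d k q 1
      + (real (n choose k) - real (s choose k)) * tuple_avoid_prob d k q 2) / real (n choose k)"

lemma expectation_rb_scope_satisfied_by_both:
  assumes S: "S \<subseteq> {..<n}" "card S = k" and q: "q \<le> d ^ k"
    and \<sigma>: "\<sigma> \<in> PiE {..<n} (\<lambda>_. {..<d})" and \<tau>: "\<tau> \<in> PiE {..<n} (\<lambda>_. {..<d})"
  shows "measure_pmf.expectation (pmf_of_set {I. I \<subseteq> PiE S (\<lambda>_. {..<d}) \<and> card I = q})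
           (\<lambda>I. of_bool (rb_satisfies \<sigma> (S, I) \<and> rb_satisfies \<tau> (S, I)))
       = (if S \<subseteq> {i\<in>{..<n}. \<sigma> i = \<tau> i} then tuple_avoid_prob d k q 1 else tuple_avoid_prob d k q 2)"
proof -
  define B where "B = {restrict \<sigma> S, restrict \<tau> S}"
  have fin_S: "finite S" using S by (auto intro: finite_subset)
  have B_sub: "B \<subseteq> PiE S (\<lambda>_. {..<d})" using S \<sigma> \<tau> by (auto simp: B_def PiE_iff)
  have "restrict \<sigma> S = restrict \<tau> S \<longleftrightarrow> S \<subseteq> {i\<in>{..<n}. \<sigma> i = \<tau> i}"
    using S by (auto simp: restrict_def fun_eq_iff split: if_splits)
  then have card_B: "card B = (if S \<subseteq> {i\<in>{..<n}. \<sigma> i = \<tau> i} then 1 else 2)"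
    unfolding B_def by (cases "S \<subseteq> {i\<in>{..<n}. \<sigma> i = \<tau> i}") auto
  have "(\<lambda>I. of_bool (rb_satisfies \<sigma> (S, I) \<and> rb_satisfies \<tau> (S, I)) :: real) = (\<lambda>I. of_bool (I \<inter> B = {}))"
    by (auto simp: rb_satisfies_def B_def)
  then show ?thesis
    using expectation_random_subset_disjoint_from[OF _ B_sub, of q] fin_S S q card_B
    by (simp add: tuple_avoid_prob_def finite_PiE card_PiE)
qed

lemma expectation_rb_constraint_satisfied_by_both:
  assumes "k \<le> n" "q \<le> d ^ k"
    and \<sigma>: "\<sigma> \<in> PiE {..<n} (\<lambda>_. {..<d})" and \<tau>: "\<tau> \<in> PiE {..<n} (\<lambda>_. {..<d})"
  shows "measure_pmf.expectation (rb_constraint_pmf n d k q) (\<lambda>c. of_bool (rb_satisfies \<sigma> c \<and> rb_satisfies \<tau> c))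
       = rb_pair_prob n d k q (card {i\<in>{..<n}. \<sigma> i = \<tau> i})"
proof -
  define K where "K = {S. S \<subseteq> {..<n} \<and> card S = k}"
  define Q where "Q = (\<lambda>S :: nat set. {I. I \<subseteq> PiE S (\<lambda>_. {..<d}) \<and> card I = q})"
  define Ag where "Ag = {i\<in>{..<n}. \<sigma> i = \<tau> i}"
  have K: "finite K" "K \<noteq> {}"
    using assms(1) obtain_subset_with_card_n[of k "{..<n}"] by (auto simp: K_def)
  have Q: "finite (Q S)" "Q S \<noteq> {}" if "S \<in> K" for S
  proof -
    have "finite S" "card S = k" using that by (auto simp: K_def intro: finite_subset)
    then show "finite (Q S)" "Q S \<noteq> {}"
      using assms(2) obtain_subset_with_card_n[of q "PiE S (\<lambda>_. {..<d})"]
      by (auto simp: Q_def finite_PiE card_PiE)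
  qed
  have "rb_constraint_pmf n d k q = pmf_of_set K \<bind> (\<lambda>S. map_pmf (Pair S) (pmf_of_set (Q S)))"
    by (simp add: rb_constraint_pmf_def K_def Q_def map_pmf_def)
  then have "measure_pmf.expectation (rb_constraint_pmf n d k q) (\<lambda>c. of_bool (rb_satisfies \<sigma> c \<and> rb_satisfies \<tau> c))
      = (\<Sum>S\<in>K. measure_pmf.expectation (pmf_of_set (Q S))
           (\<lambda>I. of_bool (rb_satisfies \<sigma> (S, I) \<and> rb_satisfies \<tau> (S, I))) / real (card K))"
    using K Q by (simp add: pmf_expectation_bind_pmf_of_set divide_inverse_commute)
  also have "\<dots> = (\<Sum>S\<in>K. (if S \<subseteq> Ag then tuple_avoid_prob d k q 1 else tuple_avoid_prob d k q 2)
      / real (card K))"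
    using expectation_rb_scope_satisfied_by_both[OF _ _ assms(2) \<sigma> \<tau>]
    by (intro sum.cong refl) (simp add: K_def Q_def Ag_def)
  also have "\<dots> = measure_pmf.expectation (pmf_of_set K)
      (\<lambda>S. if S \<subseteq> Ag then tuple_avoid_prob d k q 1 else tuple_avoid_prob d k q 2)"
    using K by (simp add: integral_pmf_of_set sum_divide_distrib)
  also have "\<dots> = rb_pair_prob n d k q (card Ag)"
    unfolding K_def rb_pair_prob_def by (rule expectation_random_scope_subset) (auto simp: assms Ag_def)
  finally show ?thesis by (simp add: Ag_def)
qed

lemma real_num_sol_eq_sum_prod:
  "real (rb_num_sol n d t inst)
     = (\<Sum>\<sigma>\<in>PiE {..<n} (\<lambda>_. {..<d}). \<Prod>i<t. of_bool (rb_satisfies \<sigma> (inst i)))"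
proof -
  have "{\<sigma> \<in> PiE {..<n} (\<lambda>_. {..<d}). \<forall>i<t. restrict \<sigma> (fst (inst i)) \<notin> snd (inst i)}
      = PiE {..<n} (\<lambda>_. {..<d}) \<inter> {\<sigma>. \<forall>i\<in>{..<t}. rb_satisfies \<sigma> (inst i)}"
    by (auto simp: rb_satisfies_def)
  then show ?thesis
    by (simp add: rb_num_sol_def finite_PiE of_bool_Ball_eq_prod flip: sum_of_bool_eq)
qed

lemma expectation_num_sol:
  "measure_pmf.expectation (rb_instance_pmf n d k q t) (\<lambda>inst. real (rb_num_sol n d t inst))
     = (\<Sum>\<sigma>\<in>PiE {..<n} (\<lambda>_. {..<d}).
          measure_pmf.expectation (rb_constraint_pmf n d k q) (\<lambda>c. of_bool (rb_satisfies \<sigma> c)) ^ t)"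
  unfolding real_num_sol_eq_sum_prod rb_instance_pmf_def
  by (simp add: Bochner_Integration.integral_sum integrable_Pi_pmf_prod_of_bool expectation_Pi_pmf_prod_of_bool)

lemma expectation_num_sol_squared:
  "measure_pmf.expectation (rb_instance_pmf n d k q t) (\<lambda>inst. real (rb_num_sol n d t inst) ^ 2)
     = (\<Sum>\<sigma>\<in>PiE {..<n} (\<lambda>_. {..<d}). \<Sum>\<tau>\<in>PiE {..<n} (\<lambda>_. {..<d}).
          measure_pmf.expectation (rb_constraint_pmf n d k q)
            (\<lambda>c. of_bool (rb_satisfies \<sigma> c \<and> rb_satisfies \<tau> c)) ^ t)"
proof -
  have "real (rb_num_sol n d t inst) ^ 2
      = (\<Sum>\<sigma>\<in>PiE {..<n} (\<lambda>_. {..<d}). \<Sum>\<tau>\<in>PiE {..<n} (\<lambda>_. {..<d}).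
           \<Prod>i<t. of_bool (rb_satisfies \<sigma> (inst i) \<and> rb_satisfies \<tau> (inst i)))" for inst
    unfolding real_num_sol_eq_sum_prod power2_eq_square sum_product
    by (simp add: prod.distrib[symmetric] of_bool_conj)
  moreover have "measure_pmf.expectation (rb_instance_pmf n d k q t)
      (\<lambda>inst. \<Prod>i<t. of_bool (rb_satisfies \<sigma> (inst i) \<and> rb_satisfies \<tau> (inst i)) :: real)
    = measure_pmf.expectation (rb_constraint_pmf n d k q)
        (\<lambda>c. of_bool (rb_satisfies \<sigma> c \<and> rb_satisfies \<tau> c)) ^ t" for \<sigma> \<tau>
    unfolding rb_instance_pmf_def
    by (rule expectation_Pi_pmf_prod_of_bool[where P = "\<lambda>c. rb_satisfies \<sigma> c \<and> rb_satisfies \<tau> c"])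
  moreover have "integrable (measure_pmf (rb_instance_pmf n d k q t))
      (\<lambda>inst. \<Prod>i<t. of_bool (rb_satisfies \<sigma> (inst i) \<and> rb_satisfies \<tau> (inst i)) :: real)" for \<sigma> \<tau>
    unfolding rb_instance_pmf_def
    by (rule integrable_Pi_pmf_prod_of_bool[where P = "\<lambda>c. rb_satisfies \<sigma> c \<and> rb_satisfies \<tau> c"])
  ultimately show ?thesis
    by (simp add: Bochner_Integration.integral_sum Bochner_Integration.integrable_sum)
qed

lemma card_assignments_with_agreement_set:
  assumes \<sigma>: "\<sigma> \<in> PiE {..<n} (\<lambda>_. {..<d::nat})" and B: "B \<subseteq> {..<n}"
  shows "card {\<tau> \<in> PiE {..<n} (\<lambda>_. {..<d}). {i\<in>{..<n}. \<sigma> i = \<tau> i} = B} = (d - 1) ^ (n - card B)"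
proof -
  have eq: "{\<tau> \<in> PiE {..<n} (\<lambda>_. {..<d}). {i\<in>{..<n}. \<sigma> i = \<tau> i} = B}
     = PiE {..<n} (\<lambda>i. if i \<in> B then {\<sigma> i} else {..<d} - {\<sigma> i})"
  proof (intro equalityI subsetI)
    fix \<tau> assume "\<tau> \<in> {\<tau> \<in> PiE {..<n} (\<lambda>_. {..<d}). {i\<in>{..<n}. \<sigma> i = \<tau> i} = B}"
    then show "\<tau> \<in> PiE {..<n} (\<lambda>i. if i \<in> B then {\<sigma> i} else {..<d} - {\<sigma> i})"
      by (auto simp: PiE_iff)
  next
    fix \<tau> assume h: "\<tau> \<in> PiE {..<n} (\<lambda>i. if i \<in> B then {\<sigma> i} else {..<d} - {\<sigma> i})"
    have "\<tau> \<in> PiE {..<n} (\<lambda>_. {..<d})" unfolding PiE_iff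
    proof (intro conjI ballI)
      fix i assume i: "i \<in> {..<n}"
      then have "\<tau> i \<in> (if i \<in> B then {\<sigma> i} else {..<d} - {\<sigma> i})" using h by (auto simp: PiE_iff)
      moreover have "\<sigma> i < d" using \<sigma> i by (auto simp: PiE_iff)
      ultimately show "\<tau> i \<in> {..<d}" by (auto split: if_splits)
    qed (use h in \<open>auto simp: PiE_iff\<close>)
    moreover have "{i\<in>{..<n}. \<sigma> i = \<tau> i} = B" using h B by (auto simp: PiE_iff split: if_splits)
    ultimately show "\<tau> \<in> {\<tau> \<in> PiE {..<n} (\<lambda>_. {..<d}). {i\<in>{..<n}. \<sigma> i = \<tau> i} = B}" by simp
  qed
  have c: "card (if i \<in> B then {\<sigma> i} else {..<d} - {\<sigma> i}) = (if i \<in> B then 1 else d - 1)" if "i < n" for i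
    using \<sigma> that by (auto simp: PiE_iff)
  have "card (PiE {..<n} (\<lambda>i. if i \<in> B then {\<sigma> i} else {..<d} - {\<sigma> i})) = (\<Prod>i<n. if i \<in> B then 1 else d - 1)"
    by (simp add: card_PiE c)
  also have "\<dots> = (\<Prod>i\<in>{..<n} - B. d - 1)"
    by (subst prod.If_cases) (auto simp: Diff_eq)
  also have "\<dots> = (d - 1) ^ (n - card B)" using B by (simp add: card_Diff_subset finite_subset)
  finally show ?thesis using eq by simp
qed

lemma sum_assignments_by_agreement:
  fixes F :: "nat \<Rightarrow> real"
  assumes \<sigma>: "\<sigma> \<in> PiE {..<n} (\<lambda>_. {..<d::nat})"
  shows "(\<Sum>\<tau>\<in>PiE {..<n} (\<lambda>_. {..<d}). F (card {i\<in>{..<n}. \<sigma> i = \<tau> i}))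
       = (\<Sum>S\<le>n. real (n choose S) * real (d - 1) ^ (n - S) * F S)"
proof -
  define Sig where "Sig = PiE {..<n} (\<lambda>_. {..<d})"
  define Ag where "Ag = (\<lambda>\<tau>. {i\<in>{..<n}. \<sigma> i = \<tau> i})"
  have fSig: "finite Sig" unfolding Sig_def by (simp add: finite_PiE)
  have "(\<Sum>\<tau>\<in>Sig. F (card (Ag \<tau>))) = (\<Sum>B\<in>Pow {..<n}. \<Sum>\<tau>\<in>{\<tau>\<in>Sig. Ag \<tau> = B}. F (card (Ag \<tau>)))"
    by (rule sum.group[symmetric]) (auto simp: fSig Ag_def)
  also have "\<dots> = (\<Sum>B\<in>Pow {..<n}. real ((d - 1) ^ (n - card B)) * F (card B))"
  proof (rule sum.cong, rule refl)
    fix B assume B: "B \<in> Pow {..<n}"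
    have "(\<Sum>\<tau>\<in>{\<tau>\<in>Sig. Ag \<tau> = B}. F (card (Ag \<tau>))) = (\<Sum>\<tau>\<in>{\<tau>\<in>Sig. Ag \<tau> = B}. F (card B))"
      by (rule sum.cong) auto
    also have "\<dots> = real (card {\<tau>\<in>Sig. Ag \<tau> = B}) * F (card B)" by simp
    also have "card {\<tau>\<in>Sig. Ag \<tau> = B} = (d - 1) ^ (n - card B)"
      unfolding Sig_def Ag_def using card_assignments_with_agreement_set[OF \<sigma>] B by simp
    finally show "(\<Sum>\<tau>\<in>{\<tau>\<in>Sig. Ag \<tau> = B}. F (card (Ag \<tau>))) = real ((d - 1) ^ (n - card B)) * F (card B)" .
  qed
  also have "\<dots> = (\<Sum>S\<in>{..n}. \<Sum>B\<in>{B\<in>Pow {..<n}. card B = S}. real ((d - 1) ^ (n - card B)) * F (card B))"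
    by (rule sum.group[symmetric]) (auto intro: card_mono[of "{..<n}", simplified])
  also have "\<dots> = (\<Sum>S\<le>n. real (n choose S) * real (d - 1) ^ (n - S) * F S)"
  proof (rule sum.cong, rule refl)
    fix S assume "S \<in> {..n}"
    have "(\<Sum>B\<in>{B\<in>Pow {..<n}. card B = S}. real ((d - 1) ^ (n - card B)) * F (card B))
        = (\<Sum>B\<in>{B\<in>Pow {..<n}. card B = S}. real ((d - 1) ^ (n - S)) * F S)"
      by (rule sum.cong) auto
    also have "\<dots> = real (card {B\<in>Pow {..<n}. card B = S}) * (real ((d - 1) ^ (n - S)) * F S)" by simp
    also have "card {B\<in>Pow {..<n}. card B = S} = n choose S"
      using n_subsets[of "{..<n}" S] by simp
    finally show "(\<Sum>B\<in>{B\<in>Pow {..<n}. card B = S}. real ((d - 1) ^ (n - card B)) * F (card B))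
        = real (n choose S) * real (d - 1) ^ (n - S) * F S" by simp
  qed
  finally show ?thesis unfolding Sig_def Ag_def .
qed

lemma tuple_avoid_prob_one:
  assumes "q \<le> d ^ k" "0 < d"
  shows "tuple_avoid_prob d k q 1 = (real d ^ k - real q) / real d ^ k"
proof -
  have "real (d ^ k choose q) > 0" "real d ^ k > 0" using assms by simp_all
  then show ?thesis
    using real_choose_diff_one[of "d ^ k" q] assms
    by (simp add: tuple_avoid_prob_def field_simps of_nat_diff)
qed

lemma tuple_avoid_prob_two:
  assumes "q \<le> d ^ k" "2 \<le> d ^ k"
  shows "tuple_avoid_prob d k q 2
       = (real d ^ k - real q) * (real d ^ k - real q - 1) / (real d ^ k * (real d ^ k - 1))"
proof -
  define N where "N = d ^ k"
  have N: "q \<le> N" "2 \<le> N" "real d ^ k = real N" using assms by (simp_all add: N_def)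
  have "real (N - q) * real (N - 1 - q) = (real N - real q) * (real N - real q - 1)"
    using N by (cases "q = N") (auto simp: of_nat_diff)
  then have "real N * (real N - 1) * real ((N - 2) choose q)
      = (real N - real q) * (real N - real q - 1) * real (N choose q)"
    using real_choose_diff_two[of N q] N by (simp add: of_nat_diff)
  moreover have "real N * (real N - 1) > 0" using N by (intro mult_pos_pos) linarith+
  moreover have "real (N choose q) > 0" using N by simp
  ultimately show ?thesis
    using N(2) unfolding tuple_avoid_prob_def N(3) N_def[symmetric]
    by (subst frac_eq_eq) (auto simp: algebra_simps)
qed

(* The exact base is rb_base at c = binom(S,k)/binom(n,k), the paper's f(s) is rb_base at c = s^k. *)
definition rb_base :: "real \<Rightarrow> nat \<Rightarrow> nat \<Rightarrow> real \<Rightarrow> real" where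
  "rb_base p d k c = 1 + p / (1 - p) * ((c - (1 / real d) ^ k) / (1 - (1 / real d) ^ k))"

lemma rb_f_eq_rb_base: "rb_f p d k s = rb_base p d k (s ^ k)"
  by (simp add: rb_f_def rb_base_def)

lemma rb_pair_prob_div_square:
  assumes "k \<le> n" "2 \<le> d ^ k" "q < d ^ k"
  shows "rb_pair_prob n d k q s / tuple_avoid_prob d k q 1 ^ 2
       = rb_base (real q / real d ^ k) d k (real (s choose k) / real (n choose k))"
proof -
  define N where "N = real d ^ k"
  define c where "c = real (s choose k) / real (n choose k)"
  have N: "2 \<le> N" "real q < N"
    using assms(2,3) unfolding N_def by (metis of_nat_le_iff of_nat_numeral of_nat_power, metis of_nat_less_iff of_nat_power)
  have "0 < d" using assms(2) by (cases "d = 0") (auto simp: power_0_left split: if_splits)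
  then have a1: "tuple_avoid_prob d k q 1 = (N - q) / N"
    using tuple_avoid_prob_one[of q d k] assms(3) by (simp add: N_def)
  have a2: "tuple_avoid_prob d k q 2 = (N - q) * (N - q - 1) / (N * (N - 1))"
    using tuple_avoid_prob_two[of q d k] assms(2,3) by (simp add: N_def)
  have "real (n choose k) > 0" using assms(1) by simp
  then have "rb_pair_prob n d k q s = c * tuple_avoid_prob d k q 1 + (1 - c) * tuple_avoid_prob d k q 2"
    unfolding rb_pair_prob_def c_def by (simp add: field_simps)
  then have pair: "rb_pair_prob n d k q s
      = c * ((N - q) / N) + (1 - c) * ((N - q) * (N - q - 1) / (N * (N - 1)))"
    unfolding a1 a2 .
  have "(c * ((N - q) / N) + (1 - c) * ((N - q) * (N - q - 1) / (N * (N - 1)))) / ((N - q) / N) ^ 2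
      = (c * N * (N - 1) + (1 - c) * N * (N - q - 1)) / ((N - 1) * (N - q))"
    using N by (simp add: divide_simps power2_eq_square) (simp add: algebra_simps)
  also have "\<dots> = ((N - 1) * (N - q) + q * (c * N - 1)) / ((N - 1) * (N - q))"
    by (simp add: algebra_simps)
  also have "\<dots> = 1 + (q / N) / (1 - q / N) * ((c - 1 / N) / (1 - 1 / N))"
    using N by (simp add: divide_simps)
  finally show ?thesis
    unfolding pair a1 rb_base_def by (simp add: N_def c_def power_one_over)
qed

lemma rb_B_eq:
  assumes "S \<le> n" "0 < d"
  shows "rb_B n d S = real (n choose S) * real (d - 1) ^ (n - S) / real d ^ n"
proof -
  have "1 - 1 / real d = real (d - 1) / real d" using assms(2) by (simp add: of_nat_diff field_simps)
  then have "rb_B n d S = real (n choose S) * real (d - 1) ^ (n - S) / (real d ^ S * real d ^ (n - S))"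
    by (simp add: rb_B_def power_divide power_one_over)
  also have "real d ^ S * real d ^ (n - S) = real d ^ n" using assms(1) by (simp flip: power_add)
  finally show ?thesis .
qed

lemma rb_first_moment:
  assumes "k \<le> n" "q \<le> d ^ k"
  shows "measure_pmf.expectation (rb_instance_pmf n d k q t) (\<lambda>inst. real (rb_num_sol n d t inst))
       = real d ^ n * tuple_avoid_prob d k q 1 ^ t"
proof -
  have "{i\<in>{..<n}. \<sigma> i = \<sigma> i} = {..<n}" for \<sigma> :: "nat \<Rightarrow> nat" by auto
  then have "measure_pmf.expectation (rb_constraint_pmf n d k q) (\<lambda>c. of_bool (rb_satisfies \<sigma> c))
      = tuple_avoid_prob d k q 1" if "\<sigma> \<in> PiE {..<n} (\<lambda>_. {..<d})" for \<sigma>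
    using expectation_rb_constraint_satisfied_by_both[OF assms, of \<sigma> \<sigma>] that assms(1)
    by (simp add: rb_pair_prob_def)
  then show ?thesis by (simp add: expectation_num_sol card_PiE)
qed

lemma rb_second_moment:
  assumes "k \<le> n" "q \<le> d ^ k"
  shows "measure_pmf.expectation (rb_instance_pmf n d k q t) (\<lambda>inst. real (rb_num_sol n d t inst) ^ 2)
       = real d ^ n * (\<Sum>S\<le>n. real (n choose S) * real (d - 1) ^ (n - S) * rb_pair_prob n d k q S ^ t)"
proof -
  have "measure_pmf.expectation (rb_instance_pmf n d k q t) (\<lambda>inst. real (rb_num_sol n d t inst) ^ 2)
      = (\<Sum>\<sigma>\<in>PiE {..<n} (\<lambda>_. {..<d}). \<Sum>\<tau>\<in>PiE {..<n} (\<lambda>_. {..<d}).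
           rb_pair_prob n d k q (card {i\<in>{..<n}. \<sigma> i = \<tau> i}) ^ t)"
    unfolding expectation_num_sol_squared using expectation_rb_constraint_satisfied_by_both[OF assms] by simp
  also have "\<dots> = (\<Sum>\<sigma>\<in>PiE {..<n} (\<lambda>_. {..<d}).
      \<Sum>S\<le>n. real (n choose S) * real (d - 1) ^ (n - S) * rb_pair_prob n d k q S ^ t)"
    by (rule sum.cong[OF refl], rule sum_assignments_by_agreement)
  finally show ?thesis by (simp add: card_PiE)
qed

lemma rb_second_moment_ratio_eq:
  assumes "k \<le> n" "2 \<le> d ^ k" "q < d ^ k"
  shows "measure_pmf.expectation (rb_instance_pmf n d k q t) (\<lambda>inst. real (rb_num_sol n d t inst) ^ 2)
         / (measure_pmf.expectation (rb_instance_pmf n d k q t) (\<lambda>inst. real (rb_num_sol n d t inst))) ^ 2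
       = (\<Sum>S\<le>n. rb_B n d S * rb_base (real q / real d ^ k) d k (real (S choose k) / real (n choose k)) ^ t)"
proof -
  define a1 where "a1 = tuple_avoid_prob d k q 1"
  define P where "P = rb_pair_prob n d k q"
  have d: "0 < d" using assms(2) by (cases "d = 0") (auto simp: power_0_left split: if_splits)
  have "real q < real d ^ k" using assms(3) by (metis of_nat_less_iff of_nat_power)
  then have "a1 > 0" using tuple_avoid_prob_one[of q d k] assms(3) d by (simp add: a1_def)
  have "real d ^ n * (\<Sum>S\<le>n. real (n choose S) * real (d - 1) ^ (n - S) * P S ^ t) / (real d ^ n * a1 ^ t) ^ 2
      = (\<Sum>S\<le>n. real (n choose S) * real (d - 1) ^ (n - S) * P S ^ t) / (real d ^ n * (a1 ^ 2) ^ t)"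
    using d by (simp add: power_mult_distrib power2_eq_square flip: power_mult_distrib)
  also have "\<dots> = (\<Sum>S\<le>n. real (n choose S) * real (d - 1) ^ (n - S) / real d ^ n * (P S / a1 ^ 2) ^ t)"
    unfolding sum_divide_distrib by (simp add: power_divide)
  also have "\<dots> = (\<Sum>S\<le>n. rb_B n d S * rb_base (real q / real d ^ k) d k (real (S choose k) / real (n choose k)) ^ t)"
    unfolding P_def a1_def rb_pair_prob_div_square[OF assms] using d by (simp add: rb_B_eq)
  finally show ?thesis
    unfolding rb_first_moment[OF assms(1) less_imp_le[OF assms(3)]] rb_second_moment[OF assms(1) less_imp_le[OF assms(3)]]
      P_def a1_def .
qed

section \<open>From the exact bases to the corrected bases\<close>

lemma sum_lessThan_real_eq: "(\<Sum>i<k. real i) = real k * (real k - 1) / 2"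
  by (induction k) (auto simp: field_simps)

lemma one_minus_mult_power_bounds:
  fixes x :: real
  assumes "0 \<le> x" "x \<le> 1"
  shows "0 \<le> (1 - x) * x ^ j" "(1 - x) * x ^ j \<le> 1"
proof -
  have "x ^ j \<le> 1" using assms by (rule power_le_one)
  then show "(1 - x) * x ^ j \<le> 1" using assms mult_mono[of "1 - x" 1 "x ^ j" 1] by simp
qed (use assms in simp)

lemma prod_diff_linear_approx:
  fixes x :: real and a :: "nat \<Rightarrow> real"
  assumes x: "0 \<le> x" "x \<le> 1" and a: "\<And>i. i < m \<Longrightarrow> 0 \<le> a i \<and> a i \<le> 1"
  shows "\<bar>(\<Prod>i<m. x - a i) - (x ^ m - (\<Sum>i<m. a i) * x ^ (m - 1))\<bar> \<le> (\<Sum>i<m. a i) ^ 2"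
  using a
proof (induction m)
  case (Suc m)
  define s where "s = (\<Sum>i<m. a i)"
  define E where "E = (\<Prod>i<m. x - a i) - (x ^ m - s * x ^ (m - 1))"
  have IH: "\<bar>E\<bar> \<le> s ^ 2" unfolding E_def s_def using Suc by auto
  have am: "0 \<le> a m" "a m \<le> 1" using Suc.prems by auto
  have s0: "s \<ge> 0" unfolding s_def using Suc.prems by (auto intro: sum_nonneg)
  have xm: "0 \<le> x ^ (m - 1)" "x ^ (m - 1) \<le> 1" using x by (auto intro: power_le_one)
  have "(\<Prod>i<Suc m. x - a i) - (x ^ Suc m - (\<Sum>i<Suc m. a i) * x ^ (Suc m - 1))
      = (x - a m) * E + a m * s * x ^ (m - 1)"
    by (cases m) (simp_all add: E_def s_def algebra_simps)
  also have "\<bar>\<dots>\<bar> \<le> \<bar>x - a m\<bar> * \<bar>E\<bar> + a m * s * x ^ (m - 1)"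
    using am s0 xm by (simp add: abs_mult abs_triangle_ineq[THEN order_trans])
  also have "\<dots> \<le> 1 * s ^ 2 + a m * s * 1"
    using x am s0 xm IH by (intro add_mono mult_mono mult_left_mono) auto
  also have "\<dots> \<le> (\<Sum>i<Suc m. a i) ^ 2"
    using am s0 by (simp add: s_def power2_eq_square algebra_simps)
  finally show ?case .
qed simp

lemma quotient_linear_approx:
  fixes P Q x \<sigma> :: real
  assumes k: "1 \<le> k" and x: "0 \<le> x" "x \<le> 1" and \<sigma>: "0 \<le> \<sigma>" "\<sigma> \<le> 1/4"
    and P: "\<bar>P - (x ^ k - \<sigma> * x ^ (k - 1))\<bar> \<le> \<sigma>\<^sup>2"
    and Q: "\<bar>Q - (1 - \<sigma>)\<bar> \<le> \<sigma>\<^sup>2"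
  shows "\<bar>P / Q - (x ^ k - \<sigma> * ((1 - x) * x ^ (k - 1)))\<bar> \<le> 6 * \<sigma>\<^sup>2"
proof -
  define y where "y = (1 - x) * x ^ (k - 1)"
  define T where "T = x ^ k - \<sigma> * y"
  have y: "0 \<le> y" "y \<le> 1" unfolding y_def using one_minus_mult_power_bounds[OF x] by auto
  have "0 \<le> x ^ k" "x ^ k \<le> 1" using x by (auto intro: power_le_one)
  moreover have "\<sigma> * y \<le> 1/4 * 1" using \<sigma> y by (intro mult_mono) auto
  moreover have "0 \<le> \<sigma> * y" using \<sigma> y by simp
  ultimately have T: "\<bar>T\<bar> \<le> 1" unfolding T_def by linarith
  have "x ^ k = x * x ^ (k - 1)" using k by (simp flip: power_Suc)
  then have "P - T * Q = (P - (x ^ k - \<sigma> * x ^ (k - 1))) - \<sigma>\<^sup>2 * y - T * (Q - (1 - \<sigma>))"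
    by (simp add: T_def y_def algebra_simps power2_eq_square)
  moreover have "\<sigma>\<^sup>2 * y \<le> \<sigma>\<^sup>2" "0 \<le> \<sigma>\<^sup>2 * y" using y mult_left_mono[of y 1 "\<sigma>\<^sup>2"] by simp_all
  moreover have "\<bar>T * (Q - (1 - \<sigma>))\<bar> \<le> 1 * \<sigma>\<^sup>2"
    unfolding abs_mult using T Q by (intro mult_mono) auto
  ultimately have num: "\<bar>P - T * Q\<bar> \<le> 3 * \<sigma>\<^sup>2" using P by (simp only: abs_le_iff) linarith
  have "\<sigma>\<^sup>2 \<le> 1/4 * 1/4" using \<sigma> mult_mono[of \<sigma> "1/4" \<sigma> "1/4"] by (simp add: power2_eq_square)
  then have Q_half: "Q \<ge> 1/2" using Q \<sigma> by linarith
  then have "\<bar>P / Q - T\<bar> = \<bar>P - T * Q\<bar> / Q" by (simp add: field_simps)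
  also have "\<dots> \<le> (3 * \<sigma>\<^sup>2) / (1/2)" using num Q_half by (intro frac_le) auto
  finally show ?thesis by (simp add: T_def y_def)
qed

lemma real_choose_eq_prod: "real (S choose k) = (\<Prod>i<k. real S - real i) / fact k"
  by (simp add: binomial_gbinomial gbinomial_prod_rev atLeast0LessThan)

lemma rb_g_div_eq:
  "rb_g k s / real n = - (real k * (real k - 1) / (2 * real n)) * ((1 - s) * s ^ (k - 1))"
  by (simp add: rb_g_def)

lemma choose_ratio_approx:
  assumes k: "1 \<le> k" "k \<le> n" and S: "S \<le> n"
    and \<sigma>: "\<sigma> = real k * (real k - 1) / (2 * real n)" "\<sigma> \<le> 1/4"
  shows "\<bar>real (S choose k) / real (n choose k) - ((real S / real n) ^ k + rb_g k (real S / real n) / real n)\<bar>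
    \<le> 6 * \<sigma>\<^sup>2"
proof -
  define x where "x = real S / real n"
  define a where "a = (\<lambda>i::nat. real i / real n)"
  have n: "real n > 0" using k by simp
  have x: "0 \<le> x" "x \<le> 1" unfolding x_def using S n by (auto simp: field_simps)
  have a: "0 \<le> a i \<and> a i \<le> 1" if "i < k" for i unfolding a_def using that k n by (auto simp: field_simps)
  have sum_a: "(\<Sum>i<k. a i) = \<sigma>" unfolding a_def \<sigma> by (simp add: sum_lessThan_real_eq flip: sum_divide_distrib)
  have "(\<Prod>i<k. real S - real i) = (\<Prod>i<k. real n * (x - a i))"
    "(\<Prod>i<k. real n - real i) = (\<Prod>i<k. real n * (1 - a i))"
    using n by (auto simp: x_def a_def field_simps intro!: prod.cong)
  then have "real (S choose k) / real (n choose k) = (\<Prod>i<k. x - a i) / (\<Prod>i<k. 1 - a i)"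
    using n unfolding real_choose_eq_prod by (simp add: prod.distrib fact_nonzero)
  moreover have "\<bar>(\<Prod>i<k. x - a i) / (\<Prod>i<k. 1 - a i) - (x ^ k - \<sigma> * ((1 - x) * x ^ (k - 1)))\<bar> \<le> 6 * \<sigma>\<^sup>2"
    using prod_diff_linear_approx[OF x, of k a] prod_diff_linear_approx[of 1 k a] a sum_a \<sigma> k x
    by (intro quotient_linear_approx) auto
  ultimately show ?thesis by (simp add: rb_g_div_eq \<sigma>(1) x_def)
qed

lemma sum_weighted_power_mono:
  fixes w A R :: "nat \<Rightarrow> real"
  assumes "\<And>S. S \<in> I \<Longrightarrow> 0 \<le> w S" "\<And>S. S \<in> I \<Longrightarrow> 0 \<le> A S \<and> A S \<le> R S"
  shows "(\<Sum>S\<in>I. w S * A S ^ t) \<le> (\<Sum>S\<in>I. w S * R S ^ t)"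
  using assms by (intro sum_mono mult_left_mono power_mono) auto

lemma power_sum_ratio_bound:
  fixes w A R :: "nat \<Rightarrow> real" and \<delta> :: real
  assumes w: "\<And>S. S \<in> I \<Longrightarrow> 0 \<le> w S" and A: "\<And>S. S \<in> I \<Longrightarrow> 0 \<le> A S"
    and RA: "\<And>S. S \<in> I \<Longrightarrow> \<bar>R S - A S\<bar> \<le> \<delta> * A S"
    and \<delta>: "0 \<le> \<delta>" "\<delta> \<le> 1" and pos: "0 < (\<Sum>S\<in>I. w S * A S ^ t)"
  shows "\<bar>(\<Sum>S\<in>I. w S * R S ^ t) / (\<Sum>S\<in>I. w S * A S ^ t) - 1\<bar> \<le> exp (real t * \<delta>) - 1"
proof -
  define SA where "SA = (\<Sum>S\<in>I. w S * A S ^ t)"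
  define SR where "SR = (\<Sum>S\<in>I. w S * R S ^ t)"
  have "(1 - \<delta>) ^ t * SA = (\<Sum>S\<in>I. w S * ((1 - \<delta>) * A S) ^ t)"
    "(1 + \<delta>) ^ t * SA = (\<Sum>S\<in>I. w S * ((1 + \<delta>) * A S) ^ t)"
    unfolding SA_def by (simp_all add: sum_distrib_left power_mult_distrib mult_ac)
  moreover have "0 \<le> (1 - \<delta>) * A S" "(1 - \<delta>) * A S \<le> R S" "R S \<le> (1 + \<delta>) * A S" if "S \<in> I" for S
    using A[OF that] RA[OF that] \<delta> by (auto simp: abs_le_iff algebra_simps intro: mult_left_le_one_le)
  then have "(\<Sum>S\<in>I. w S * ((1 - \<delta>) * A S) ^ t) \<le> SR" "SR \<le> (\<Sum>S\<in>I. w S * ((1 + \<delta>) * A S) ^ t)"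
    unfolding SR_def using w by (auto intro!: sum_weighted_power_mono intro: order_trans)
  ultimately have "(1 - \<delta>) ^ t \<le> SR / SA" "SR / SA \<le> (1 + \<delta>) ^ t"
    using pos by (simp_all add: SA_def field_simps)
  moreover have "(1 + \<delta>) ^ t \<le> exp (real t * \<delta>)"
    using power_mono[of "1 + \<delta>" "exp \<delta>" t] \<delta> by (simp add: exp_of_nat_mult add.commute)
  moreover have "1 - real t * \<delta> \<le> (1 - \<delta>) ^ t" using Bernoulli_inequality[of "-\<delta>" t] \<delta> by simp
  moreover have "1 + real t * \<delta> \<le> exp (real t * \<delta>)" by (rule exp_ge_add_one_self)
  ultimately show ?thesis unfolding SA_def SR_def abs_le_iff by linarith
qed

lemma rb_base_eq_affine:
  "rb_base p d k c = 1 + p / (1 - p) / (1 - (1 / real d) ^ k) * (c - (1 / real d) ^ k)"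
  by (simp add: rb_base_def)

lemma rb_base_diff:
  "rb_base p d k c - rb_base p d k c' = p / (1 - p) / (1 - (1 / real d) ^ k) * (c - c')"
proof -
  define \<beta> where "\<beta> = p / (1 - p) / (1 - (1 / real d) ^ k)"
  show ?thesis unfolding rb_base_eq_affine \<beta>_def[symmetric] by (simp add: algebra_simps)
qed

lemma rb_base_slope_bounds:
  assumes "0 \<le> pp" "pp \<le> p" "p < 1" "2 \<le> d" "1 \<le> k"
  shows "0 \<le> pp / (1 - pp) / (1 - (1 / real d) ^ k)"
    and "pp / (1 - pp) / (1 - (1 / real d) ^ k) \<le> 2 * p / (1 - p)"
proof -
  have "(1 / real d) ^ k \<le> 1 / real d" using power_decreasing[of 1 k "1 / real d"] assms(4,5) by simp
  also have "\<dots> \<le> 1 / 2" using assms(4) by (simp add: field_simps)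
  finally have e: "1 / 2 \<le> 1 - (1 / real d) ^ k" by simp
  then show "0 \<le> pp / (1 - pp) / (1 - (1 / real d) ^ k)" using assms by simp
  have "pp / (1 - pp) / (1 - (1 / real d) ^ k) \<le> pp / (1 - pp) / (1 / 2)"
    using e assms by (intro divide_left_mono) auto
  also have "\<dots> \<le> 2 * (p / (1 - p))" using assms by (simp add: frac_le)
  finally show "pp / (1 - pp) / (1 - (1 / real d) ^ k) \<le> 2 * p / (1 - p)" by simp
qed

lemma abs_rb_base_diff_le:
  assumes "0 \<le> pp" "pp \<le> p" "p < 1" "2 \<le> d" "1 \<le> k"
  shows "\<bar>rb_base pp d k c - rb_base pp d k c'\<bar> \<le> 2 * p / (1 - p) * \<bar>c - c'\<bar>"
proof -
  define \<beta> where "\<beta> = pp / (1 - pp) / (1 - (1 / real d) ^ k)"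
  have "0 \<le> \<beta>" "\<beta> \<le> 2 * p / (1 - p)" using rb_base_slope_bounds[OF assms] by (simp_all add: \<beta>_def)
  then show ?thesis
    unfolding rb_base_diff \<beta>_def[symmetric] abs_mult by (simp add: mult_right_mono del: times_divide_eq_left)
qed

lemma rb_base_mono:
  assumes "0 \<le> pp" "pp < 1" "2 \<le> d" "1 \<le> k" "c \<le> c'"
  shows "rb_base pp d k c \<le> rb_base pp d k c'"
proof -
  have "0 \<le> pp / (1 - pp) / (1 - (1 / real d) ^ k) * (c' - c)"
    using rb_base_slope_bounds(1)[of pp pp d k] assms by (intro mult_nonneg_nonneg) auto
  then show ?thesis using rb_base_diff[of pp d k c' c] by simp
qed

lemma rb_base_ge_half:
  assumes "0 \<le> pp" "pp \<le> p" "p < 1" "2 \<le> d" "1 \<le> k"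
    and "0 \<le> \<sigma>" "- \<sigma> \<le> c" "2 * p / (1 - p) * \<sigma> \<le> 1/4" "2 * p / (1 - p) / real d \<le> 1/4"
  shows "1/2 \<le> rb_base pp d k c"
proof -
  define \<beta> where "\<beta> = pp / (1 - pp) / (1 - (1 / real d) ^ k)"
  have \<beta>: "0 \<le> \<beta>" "\<beta> \<le> 2 * p / (1 - p)" using rb_base_slope_bounds[OF assms(1-5)] by (simp_all add: \<beta>_def)
  have "(1 / real d) ^ k \<le> 1 / real d" using power_decreasing[of 1 k "1 / real d"] assms(4,5) by simp
  then have "- (\<sigma> + 1 / real d) \<le> c - (1 / real d) ^ k" using assms(7) by linarith
  then have "\<beta> * - (\<sigma> + 1 / real d) \<le> \<beta> * (c - (1 / real d) ^ k)"
    by (rule mult_left_mono[OF _ \<beta>(1)])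
  then have "- (\<beta> * (\<sigma> + 1 / real d)) \<le> \<beta> * (c - (1 / real d) ^ k)"
    by (simp only: mult_minus_right)
  moreover have "\<beta> * (\<sigma> + 1 / real d) \<le> 2 * p / (1 - p) * (\<sigma> + 1 / real d)"
    using \<beta>(2) assms(4,6) by (intro mult_right_mono) auto
  moreover have "2 * p / (1 - p) * (\<sigma> + 1 / real d) = 2 * p / (1 - p) * \<sigma> + 2 * p / (1 - p) / real d"
    by (simp add: distrib_left)
  moreover have "rb_base pp d k c = 1 + \<beta> * (c - (1 / real d) ^ k)"
    unfolding rb_base_eq_affine \<beta>_def ..
  ultimately show ?thesis using assms(8,9) by linarith
qed

lemma rb_corrected_eq_rb_base:
  "rb_f p d k s + p * rb_g k s / ((1 - p) * (1 - (1 / real d) ^ k) * real n)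
     = rb_base p d k (s ^ k + rb_g k s / real n)"
proof -
  have "p * rb_g k s / ((1 - p) * (1 - (1 / real d) ^ k) * real n)
      = p / (1 - p) / (1 - (1 / real d) ^ k) * (rb_g k s / real n)"
    by (simp only: divide_inverse inverse_mult_distrib mult_ac)
  then show ?thesis
    using rb_base_diff[of p d k "s ^ k + rb_g k s / real n" "s ^ k"] by (simp add: rb_f_eq_rb_base)
qed

lemma rb_corrected_base_bounds:
  fixes n d k S :: nat and p pp b \<sigma> :: real
  defines "A \<equiv> rb_base pp d k ((real S / real n) ^ k + rb_g k (real S / real n) / real n)"
  assumes k: "1 \<le> k" "k \<le> n" and S: "S \<le> n" and d: "2 \<le> d" and pp: "0 \<le> pp" "pp \<le> p" "p < 1"
    and b: "b = 2 * p / (1 - p)" and \<sigma>: "\<sigma> = real k * (real k - 1) / (2 * real n)"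
    and small: "\<sigma> \<le> 1/4" "b * \<sigma> \<le> 1/4" "b / real d \<le> 1/4"
  shows "1/2 \<le> A"
    and "\<bar>rb_base pp d k (real (S choose k) / real (n choose k)) - A\<bar> \<le> 12 * b * \<sigma>\<^sup>2 * A"
    and "A \<le> rb_f pp d k (real S / real n)"
proof -
  define x where "x = real S / real n"
  define y where "y = (1 - x) * x ^ (k - 1)"
  have x: "0 \<le> x" "x \<le> 1" using k S by (auto simp: x_def field_simps)
  have y: "0 \<le> y" "y \<le> 1" using one_minus_mult_power_bounds[OF x] by (simp_all add: y_def)
  have b0: "0 \<le> b" using pp b by simp
  have \<sigma>0: "0 \<le> \<sigma>" using k \<sigma> by simp
  have g: "rb_g k x / real n = - \<sigma> * y" by (simp add: rb_g_div_eq \<sigma> y_def)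
  have "\<sigma> * y \<le> \<sigma>" using mult_left_mono[OF y(2) \<sigma>0] by simp
  moreover have "0 \<le> x ^ k" "0 \<le> \<sigma> * y" using x y \<sigma>0 by simp_all
  ultimately have lower: "- \<sigma> \<le> x ^ k + rb_g k x / real n" and upper: "x ^ k + rb_g k x / real n \<le> x ^ k"
    by (simp_all add: g)
  show half: "1/2 \<le> A"
    unfolding A_def x_def[symmetric]
    by (rule rb_base_ge_half[OF pp d k(1) \<sigma>0 lower small(2)[unfolded b] small(3)[unfolded b]])
  have "\<bar>rb_base pp d k (real (S choose k) / real (n choose k)) - A\<bar>
      \<le> b * \<bar>real (S choose k) / real (n choose k) - (x ^ k + rb_g k x / real n)\<bar>"
    unfolding A_def x_def[symmetric] b using pp d k by (intro abs_rb_base_diff_le) auto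
  also have "\<dots> \<le> b * (6 * \<sigma>\<^sup>2)"
    using choose_ratio_approx[OF k S \<sigma> small(1)] b0 by (intro mult_left_mono) (simp_all add: x_def)
  also have "\<dots> = 12 * b * \<sigma>\<^sup>2 * (1/2)" by simp
  also have "\<dots> \<le> 12 * b * \<sigma>\<^sup>2 * A" using half b0 by (intro mult_left_mono) auto
  finally show "\<bar>rb_base pp d k (real (S choose k) / real (n choose k)) - A\<bar> \<le> 12 * b * \<sigma>\<^sup>2 * A" .
  show "A \<le> rb_f pp d k (real S / real n)"
    unfolding A_def rb_f_eq_rb_base x_def[symmetric] using pp d k upper by (intro rb_base_mono) auto
qed

lemma rb_corrected_sum_bounds:
  fixes n d k t :: nat and p pp b \<sigma> :: real
  defines "A \<equiv> \<lambda>S. rb_base pp d k ((real S / real n) ^ k + rb_g k (real S / real n) / real n)"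
  assumes k: "1 \<le> k" "k \<le> n" and d: "2 \<le> d" and pp: "0 \<le> pp" "pp \<le> p" "p < 1"
    and b: "b = 2 * p / (1 - p)" and \<sigma>: "\<sigma> = real k * (real k - 1) / (2 * real n)"
    and small: "\<sigma> \<le> 1/4" "b * \<sigma> \<le> 1/4" "b / real d \<le> 1/4"
  shows "0 < (\<Sum>S\<le>n. rb_B n d S * A S ^ t)"
    and "\<bar>(\<Sum>S\<le>n. rb_B n d S * rb_base pp d k (real (S choose k) / real (n choose k)) ^ t)
           / (\<Sum>S\<le>n. rb_B n d S * A S ^ t) - 1\<bar> \<le> exp (real t * (12 * b * \<sigma>\<^sup>2)) - 1"
    and "(\<Sum>S\<le>n. rb_B n d S * A S ^ t) \<le> (\<Sum>S\<le>n. rb_B n d S * rb_f pp d k (real S / real n) ^ t)"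
proof -
  have bounds: "1/2 \<le> A S" "\<bar>rb_base pp d k (real (S choose k) / real (n choose k)) - A S\<bar> \<le> 12 * b * \<sigma>\<^sup>2 * A S"
    "A S \<le> rb_f pp d k (real S / real n)" if "S \<le> n" for S
    using rb_corrected_base_bounds[OF k that d pp b \<sigma> small] unfolding A_def by simp_all
  have A: "0 \<le> A S" if "S \<le> n" for S using bounds(1)[OF that] by linarith
  have B: "0 \<le> rb_B n d S" for S using d by (simp add: rb_B_def)
  have "0 < rb_B n d 0 * A 0 ^ t" using d bounds(1)[of 0] by (simp add: rb_B_def)
  then show pos: "0 < (\<Sum>S\<le>n. rb_B n d S * A S ^ t)"
    using B A by (intro sum_pos2[of _ 0]) auto
  have "0 \<le> \<sigma>" using k \<sigma> by simp
  then have "12 * b * \<sigma>\<^sup>2 \<le> 12 * (1/4) * (1/4)"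
    using small mult_mono[of "b * \<sigma>" "1/4" \<sigma> "1/4"] by (simp add: power2_eq_square mult_ac)
  moreover have "0 \<le> b" using pp b by simp
  ultimately show "\<bar>(\<Sum>S\<le>n. rb_B n d S * rb_base pp d k (real (S choose k) / real (n choose k)) ^ t)
           / (\<Sum>S\<le>n. rb_B n d S * A S ^ t) - 1\<bar> \<le> exp (real t * (12 * b * \<sigma>\<^sup>2)) - 1"
    using B A bounds(2) pos by (intro power_sum_ratio_bound) (auto simp: mult_ac)
  show "(\<Sum>S\<le>n. rb_B n d S * A S ^ t) \<le> (\<Sum>S\<le>n. rb_B n d S * rb_f pp d k (real S / real n) ^ t)"
    using B A bounds(3) by (intro sum_weighted_power_mono) auto
qed

section \<open>Asymptotics\<close>

definition rb_corrected_sum :: "real \<Rightarrow> real \<Rightarrow> nat \<Rightarrow> real \<Rightarrow> nat \<Rightarrow> real" where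
  "rb_corrected_sum \<alpha> r k p n =
     (\<Sum>S\<le>n. rb_B n (rb_d \<alpha> n) S *
        (rb_f (rb_p \<alpha> k p n) (rb_d \<alpha> n) k (real S / real n)
         + rb_p \<alpha> k p n * rb_g k (real S / real n)
           / ((1 - rb_p \<alpha> k p n) * (1 - (1 / real (rb_d \<alpha> n)) ^ k) * real n)) ^ rb_t \<alpha> r n)"

definition rb_Phi_sum :: "real \<Rightarrow> real \<Rightarrow> nat \<Rightarrow> real \<Rightarrow> nat \<Rightarrow> real" where
  "rb_Phi_sum \<alpha> r k p n =
     (\<Sum>S\<le>n. rb_B n (rb_d \<alpha> n) S * rb_f (rb_p \<alpha> k p n) (rb_d \<alpha> n) k (real S / real n) ^ rb_t \<alpha> r n)"

lemma real_nat_floor_bounds: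
  assumes "0 \<le> y"
  shows "y - 1 < real (nat \<lfloor>y\<rfloor>)" "real (nat \<lfloor>y\<rfloor>) \<le> y"
  using assms by (simp_all add: of_nat_nat)

lemma rb_q_bounds:
  assumes "0 < p" "p < 1" "0 < rb_d \<alpha> n"
  shows "real (rb_q \<alpha> k p n) \<le> p * real (rb_d \<alpha> n) ^ k" "rb_q \<alpha> k p n < rb_d \<alpha> n ^ k"
proof -
  show le: "real (rb_q \<alpha> k p n) \<le> p * real (rb_d \<alpha> n) ^ k"
    unfolding rb_q_def using assms by (intro real_nat_floor_bounds) simp
  also have "\<dots> < real (rb_d \<alpha> n) ^ k" using assms by simp
  finally show "rb_q \<alpha> k p n < rb_d \<alpha> n ^ k" by (simp flip: of_nat_power)
qed

lemma rb_t_le: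
  assumes "0 < r" "1 \<le> n" "1 \<le> rb_d \<alpha> n"
  shows "real (rb_t \<alpha> r n) \<le> r * \<alpha> * real n * ln (real n)"
proof -
  have "real (rb_d \<alpha> n) \<le> real n powr \<alpha>"
    unfolding rb_d_def by (intro real_nat_floor_bounds) simp
  then have "ln (real (rb_d \<alpha> n)) \<le> \<alpha> * ln (real n)"
    using assms by (simp add: ln_powr flip: ln_le_cancel_iff)
  moreover have "0 \<le> ln (real (rb_d \<alpha> n))" using assms by simp
  ultimately have "r * real n * ln (real (rb_d \<alpha> n)) \<le> r * real n * (\<alpha> * ln (real n))"
    using assms by (intro mult_left_mono) auto
  moreover have "real (rb_t \<alpha> r n) \<le> r * real n * ln (real (rb_d \<alpha> n))"
    unfolding rb_t_def using assms \<open>0 \<le> ln (real (rb_d \<alpha> n))\<close> by (intro real_nat_floor_bounds) simp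
  ultimately show ?thesis by (simp add: mult_ac)
qed

lemma rb_moment_ratio_close_to_corrected_sum:
  fixes \<alpha> r p b \<sigma> :: real and k n :: nat
  assumes k: "1 \<le> k" "k \<le> n" and p: "0 < p" "p < 1" and d: "2 \<le> rb_d \<alpha> n"
    and b: "b = 2 * p / (1 - p)" and \<sigma>: "\<sigma> = real k * (real k - 1) / (2 * real n)"
    and small: "\<sigma> \<le> 1/4" "b * \<sigma> \<le> 1/4" "b / real (rb_d \<alpha> n) \<le> 1/4"
  shows "0 < rb_corrected_sum \<alpha> r k p n"
    and "\<bar>rb_moment_ratio \<alpha> r k p n / rb_corrected_sum \<alpha> r k p n - 1\<bar>
           \<le> exp (real (rb_t \<alpha> r n) * (12 * b * \<sigma>\<^sup>2)) - 1"
    and "rb_corrected_sum \<alpha> r k p n \<le> rb_Phi_sum \<alpha> r k p n"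
proof -
  define pp where "pp = rb_p \<alpha> k p n"
  have q: "real (rb_q \<alpha> k p n) \<le> p * real (rb_d \<alpha> n) ^ k" "rb_q \<alpha> k p n < rb_d \<alpha> n ^ k"
    using rb_q_bounds[OF p] d by simp_all
  then have pp_bounds: "0 \<le> pp" "pp \<le> p" using d by (simp_all add: pp_def rb_p_def divide_le_eq)
  have "rb_d \<alpha> n ^ 1 \<le> rb_d \<alpha> n ^ k" using d k by (intro power_increasing) auto
  then have "2 \<le> rb_d \<alpha> n ^ k" using d by simp
  then have "rb_moment_ratio \<alpha> r k p n
      = (\<Sum>S\<le>n. rb_B n (rb_d \<alpha> n) S * rb_base pp (rb_d \<alpha> n) k (real (S choose k) / real (n choose k)) ^ rb_t \<alpha> r n)"
    unfolding rb_moment_ratio_def Let_def pp_def rb_p_def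
    using rb_second_moment_ratio_eq[OF k(2) _ q(2)] by simp
  moreover have "rb_corrected_sum \<alpha> r k p n = (\<Sum>S\<le>n. rb_B n (rb_d \<alpha> n) S *
      rb_base pp (rb_d \<alpha> n) k ((real S / real n) ^ k + rb_g k (real S / real n) / real n) ^ rb_t \<alpha> r n)"
    unfolding rb_corrected_sum_def pp_def rb_corrected_eq_rb_base ..
  moreover have "rb_Phi_sum \<alpha> r k p n
      = (\<Sum>S\<le>n. rb_B n (rb_d \<alpha> n) S * rb_f pp (rb_d \<alpha> n) k (real S / real n) ^ rb_t \<alpha> r n)"
    unfolding rb_Phi_sum_def pp_def ..
  ultimately show "0 < rb_corrected_sum \<alpha> r k p n"
    and "\<bar>rb_moment_ratio \<alpha> r k p n / rb_corrected_sum \<alpha> r k p n - 1\<bar>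
           \<le> exp (real (rb_t \<alpha> r n) * (12 * b * \<sigma>\<^sup>2)) - 1"
    and "rb_corrected_sum \<alpha> r k p n \<le> rb_Phi_sum \<alpha> r k p n"
    using rb_corrected_sum_bounds[OF k d pp_bounds p(2) b \<sigma> small] by simp_all
qed

lemma falling_square_half_div_le: "real k * (real k - 1) / (2 * real n) \<le> real k ^ 2 / real n"
proof -
  have "real k * (real k - 1) / 2 \<le> real k ^ 2" by (simp add: power2_eq_square field_simps)
  then have "real k * (real k - 1) / 2 / real n \<le> real k ^ 2 / real n" by (rule divide_right_mono) simp
  then show ?thesis by simp
qed

lemma rb_error_exponent_le:
  assumes "0 < r" "1 \<le> n" "1 \<le> rb_d \<alpha> n" "0 \<le> b"
  shows "real (rb_t \<alpha> r n) * (12 * b * (real k * (real k - 1) / (2 * real n))\<^sup>2)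
    \<le> 12 * b * real k ^ 4 * r * \<alpha> * (ln (real n) / real n)"
proof -
  have "0 \<le> real k * (real k - 1) / (2 * real n)" by (cases k) simp_all
  with falling_square_half_div_le have "(real k * (real k - 1) / (2 * real n))\<^sup>2 \<le> (real k ^ 2 / real n)\<^sup>2"
    by (rule power_mono)
  then have "real (rb_t \<alpha> r n) * (12 * b * (real k * (real k - 1) / (2 * real n))\<^sup>2)
      \<le> (r * \<alpha> * real n * ln (real n)) * (12 * b * (real k ^ 2 / real n)\<^sup>2)"
    using rb_t_le[OF assms(1-3)] assms(4) by (intro mult_mono mult_left_mono) auto
  also have "\<dots> = 12 * b * real k ^ 4 * r * \<alpha> * (ln (real n) / real n)"
    using assms(2) by (simp add: power2_eq_square field_simps power4_eq_xxxx)
  finally show ?thesis .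
qed

lemma eventually_rb_moment_ratio_close:
  fixes \<alpha> r p :: real and k :: nat
  assumes \<alpha>: "0 < \<alpha>" and r: "0 < r" and k: "2 \<le> k" and p: "0 < p" "p < 1"
  defines "C \<equiv> 12 * (2 * p / (1 - p)) * real k ^ 4 * r * \<alpha>"
  shows "\<forall>\<^sub>F n in sequentially. 0 < rb_corrected_sum \<alpha> r k p n
    \<and> \<bar>rb_moment_ratio \<alpha> r k p n / rb_corrected_sum \<alpha> r k p n - 1\<bar> \<le> exp (C * (ln (real n) / real n)) - 1
    \<and> rb_corrected_sum \<alpha> r k p n \<le> rb_Phi_sum \<alpha> r k p n"
proof -
  define b where "b = 2 * p / (1 - p)"
  have b0: "0 \<le> b" using p by (simp add: b_def)
  have "filterlim (\<lambda>n::nat. real n powr \<alpha>) at_top at_top" using \<alpha> by real_asymp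
  then have "\<forall>\<^sub>F n in sequentially. max 2 (4 * b) + 1 \<le> real n powr \<alpha>" by (simp add: filterlim_at_top)
  moreover have "\<forall>\<^sub>F n in sequentially. max (real k) (4 * real k ^ 2 * (b + 1)) \<le> real n"
    using filterlim_real_sequentially unfolding filterlim_at_top by blast
  ultimately show ?thesis
  proof eventually_elim
    case (elim n)
    define \<sigma> where "\<sigma> = real k * (real k - 1) / (2 * real n)"
    have kn: "1 \<le> k" "k \<le> n" "1 \<le> n" using elim k by auto
    have "real n powr \<alpha> - 1 < real (rb_d \<alpha> n)" unfolding rb_d_def by (intro real_nat_floor_bounds) simp
    then have d: "max 2 (4 * b) \<le> real (rb_d \<alpha> n)" using elim by linarith
    then have d2: "2 \<le> rb_d \<alpha> n" and bd: "b / real (rb_d \<alpha> n) \<le> 1/4" by (auto simp: divide_le_eq)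
    have "\<sigma> \<le> real k ^ 2 / real n" unfolding \<sigma>_def by (rule falling_square_half_div_le)
    also have "\<dots> \<le> 1 / (4 * (b + 1))" using elim kn b0 by (simp add: field_simps)
    finally have "(b + 1) * \<sigma> \<le> 1/4" using b0 by (simp add: field_simps)
    moreover have "0 \<le> \<sigma>" "0 \<le> b * \<sigma>" using kn b0 by (simp_all add: \<sigma>_def)
    ultimately have small: "\<sigma> \<le> 1/4" "b * \<sigma> \<le> 1/4" by (simp_all add: algebra_simps)
    note close = rb_moment_ratio_close_to_corrected_sum[OF kn(1,2) p d2 b_def \<sigma>_def small bd, where r = r]
    have "exp (real (rb_t \<alpha> r n) * (12 * b * \<sigma>\<^sup>2)) \<le> exp (C * (ln (real n) / real n))"
      using rb_error_exponent_le[OF r kn(3) _ b0, of \<alpha> k] d2 by (simp add: C_def b_def \<sigma>_def)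
    then show ?case using close by linarith
  qed
qed

theorem lemma4p1:
  fixes \<alpha> r p :: real and k :: nat
  assumes "\<alpha> > 0" and "r > 0" and "k \<ge> 2" and "0 < p" and "p < 1"
  shows "\<exists>e1 e2 :: nat \<Rightarrow> real. e1 \<longlonglongrightarrow> 0 \<and> e2 \<longlonglongrightarrow> 0 \<and>
    (\<forall>\<^sub>F n in sequentially.
       rb_moment_ratio \<alpha> r k p n
         = (1 + e1 n) * (\<Sum>S\<le>n. rb_B n (rb_d \<alpha> n) S *
              (rb_f (rb_p \<alpha> k p n) (rb_d \<alpha> n) k (real S / real n)
               + rb_p \<alpha> k p n * rb_g k (real S / real n)
                 / ((1 - rb_p \<alpha> k p n) * (1 - (1 / real (rb_d \<alpha> n)) ^ k) * real n)) ^ rb_t \<alpha> r n)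
     \<and> (\<Sum>S\<le>n. rb_B n (rb_d \<alpha> n) S *
              (rb_f (rb_p \<alpha> k p n) (rb_d \<alpha> n) k (real S / real n)
               + rb_p \<alpha> k p n * rb_g k (real S / real n)
                 / ((1 - rb_p \<alpha> k p n) * (1 - (1 / real (rb_d \<alpha> n)) ^ k) * real n)) ^ rb_t \<alpha> r n)
         \<le> (1 + e2 n) * (\<Sum>S\<le>n. rb_B n (rb_d \<alpha> n) S *
              rb_f (rb_p \<alpha> k p n) (rb_d \<alpha> n) k (real S / real n) ^ rb_t \<alpha> r n))"
proof -
  define C where "C = 12 * (2 * p / (1 - p)) * real k ^ 4 * r * \<alpha>"
  define e1 where "e1 n = rb_moment_ratio \<alpha> r k p n / rb_corrected_sum \<alpha> r k p n - 1" for n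
  have close: "\<forall>\<^sub>F n in sequentially. 0 < rb_corrected_sum \<alpha> r k p n
      \<and> \<bar>e1 n\<bar> \<le> exp (C * (ln (real n) / real n)) - 1
      \<and> rb_corrected_sum \<alpha> r k p n \<le> rb_Phi_sum \<alpha> r k p n"
    using eventually_rb_moment_ratio_close[OF assms] unfolding C_def e1_def .
  have "(\<lambda>n. exp (C * (ln (real n) / real n)) - 1) \<longlonglongrightarrow> 0" by real_asymp
  then have "e1 \<longlonglongrightarrow> 0"
    by (rule Lim_null_comparison[rotated]) (use close in \<open>eventually_elim, simp\<close>)
  moreover have "\<forall>\<^sub>F n in sequentially. rb_moment_ratio \<alpha> r k p n = (1 + e1 n) * rb_corrected_sum \<alpha> r k p n
      \<and> rb_corrected_sum \<alpha> r k p n \<le> (1 + 0) * rb_Phi_sum \<alpha> r k p n"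
    using close by eventually_elim (simp add: e1_def)
  ultimately show ?thesis
    unfolding rb_corrected_sum_def rb_Phi_sum_def by (intro exI[of _ e1] exI[of _ "\<lambda>_. 0"]) simp
qed

end
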